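(* Let $d\ge 2$ and let $P\subset\mathbb{R}^d$ be a generic convex simplicial $d$-dimensional polytope. Then there exist at least two Delaunay BM-ears and at least two upper Delaunay BM-ears of $P$.
   Context: $P$ is generic if no $d+2$ of its vertices lie on a common $(d-1)$-dimensional sphere and $P$ is not a $d$-simplex. Let $V$ be the vertex set of $P$ and $f:\mathbb{R}^d\to\mathbb{R}^{d+1}$, $f(x_1,\dots,x_d)=(x_1,\dots,x_d,x_1^2+\dots+x_d^2)$. Let $P'$ be the convex hull of $f(V)$; it is a $(d+1)$-dimensional simplicial polytope with vertex set $f(V)$, and no facet of $P'$ has an outer normal with zero last coordinate. A facet of $P'$ is lower if its outer normal has negative last coordinate and upper if it is positive. The orthogonal projections (forgetting the last coordinate) of the lower facets form the Delaunay triangulation $DT(P)$ of $P$ (the simplices with vertices in $V$ whose circumsphere has no vertex of $P$ inside), and those of the upper facets form the upper Delaunay triangulation $UDT(P)$ (simplices whose circumsphere has all other vertices of $P$ inside). A facet $F$ of $P'$ is visible from a point $A$ if $A$ and $P'$ lie in opposite open half-spaces of the hyperplane $\mathrm{aff}(F)$. A simplex of $DT(P)$ is a Delaunay BM-ear if it is the projection of a lower facet $F$ of $P'$ that is the last facet of a Bruggesser–Mani shelling of the complex of lower facets, i.e. there exist a point $A\in\mathbb{R}^{d+1}$ from which exactly the lower facets of $P'$ are visible and a point $O$ in the interior of $P'$ such that the segment $OA$ meets the hyperplanes spanned by the lower facets in distinct points and $\mathrm{aff}(F)$ is the last of them met when moving from $O$ to $A$. Upper Delaunay BM-ears are defined in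 the same way using upper facets, $UDT(P)$, and points $A$ from which exactly the upper facets of $P'$ are visible. *)

theory Defs
  imports "HOL-Analysis.Analysis"
begin

definition vertices :: "'a::euclidean_space set \<Rightarrow> 'a set" where
  "vertices P = {v. v extreme_point_of P}"

definition simplicial_polytope :: "'a::euclidean_space set \<Rightarrow> bool" where
  "simplicial_polytope P \<longleftrightarrow> polytope P \<and>
     (\<forall>F. F facet_of P \<longrightarrow> (int DIM('a) - 1) simplex F)"

definition generic_polytope :: "'a::euclidean_space set \<Rightarrow> bool" where
  "generic_polytope P \<longleftrightarrow>
     (\<forall>W. W \<subseteq> vertices P \<and> card W = DIM('a) + 2 \<longrightarrow>
          \<not> (\<exists>c r. W \<subseteq> sphere c r)) \<and>
     \<not> (int DIM('a) simplex P)"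

text \<open>The lifting map f(x) = (x, |x|^2) into R^d x R = R^(d+1); the last
  coordinate is the second component.\<close>
definition lift :: "'a::euclidean_space \<Rightarrow> 'a \<times> real" where
  "lift x = (x, (norm x)\<^sup>2)"

definition lifted_polytope :: "'a::euclidean_space set \<Rightarrow> ('a \<times> real) set" where
  "lifted_polytope P = convex hull (lift ` vertices P)"

definition lower_facet :: "('a::euclidean_space \<times> real) set \<Rightarrow> ('a \<times> real) set \<Rightarrow> bool" where
  "lower_facet Q F \<longleftrightarrow> F facet_of Q \<and>
     (\<exists>a b. snd a < 0 \<and> Q \<subseteq> {x. inner a x \<le> b} \<and> F = Q \<inter> {x. inner a x = b})"

definition upper_facet :: "('a::euclidean_space \<times> real) set \<Rightarrow> ('a \<times> real) set \<Rightarrow> bool" where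
  "upper_facet Q F \<longleftrightarrow> F facet_of Q \<and>
     (\<exists>a b. snd a > 0 \<and> Q \<subseteq> {x. inner a x \<le> b} \<and> F = Q \<inter> {x. inner a x = b})"

definition visible_from :: "'b::euclidean_space set \<Rightarrow> 'b set \<Rightarrow> 'b \<Rightarrow> bool" where
  "visible_from Q F A \<longleftrightarrow>
     (\<exists>a b. a \<noteq> 0 \<and> affine hull F = {x. inner a x = b} \<and>
            Q \<subseteq> {x. inner a x \<le> b} \<and> inner a A > b)"

text \<open>F (satisfying the class predicate L, e.g. lower facets) is the last facet of a
  Bruggesser--Mani shelling of the facets in class L.\<close>
definition BM_last :: "'b::euclidean_space set \<Rightarrow> ('b set \<Rightarrow> bool) \<Rightarrow> 'b set \<Rightarrow> bool" where
  "BM_last Q L F \<longleftrightarrow> L F \<and>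
     (\<exists>A C. (\<forall>G. G facet_of Q \<longrightarrow> (visible_from Q G A \<longleftrightarrow> L G)) \<and>
            C \<in> interior Q \<and>
            (\<exists>p. (\<forall>G. L G \<longrightarrow> closed_segment C A \<inter> affine hull G = {p G}) \<and>
                 inj_on p {G. L G} \<and>
                 (\<forall>G. L G \<and> G \<noteq> F \<longrightarrow> dist C (p G) < dist C (p F))))"

definition delaunay_BM_ear :: "'a::euclidean_space set \<Rightarrow> 'a set \<Rightarrow> bool" where
  "delaunay_BM_ear P S \<longleftrightarrow>
     (\<exists>F. S = fst ` F \<and> BM_last (lifted_polytope P) (lower_facet (lifted_polytope P)) F)"

definition upper_delaunay_BM_ear :: "'a::euclidean_space set \<Rightarrow> 'a set \<Rightarrow> bool" where
  "upper_delaunay_BM_ear P S \<longleftrightarrow>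
     (\<exists>F. S = fst ` F \<and> BM_last (lifted_polytope P) (upper_facet (lifted_polytope P)) F)"

end

theory Submission
  imports Defs
begin

text \<open>Genericity makes the lifted polytope Q full-dimensional, and every lifted vertex is the
  only point of Q over its projection. A lower facet G spans the graph of an affine function
  h_G. Shooting from an interior point over x straight down to a far away point A, exactly the
  lower facets are visible, the segment meets aff G over x at height h_G(x), and the facet
  crossed last is the one minimising h_G(x), as long as x separates all the h_G. Choosing x
  close to a vertex v whose lift misses some lower facet, that last facet misses the lift of v
  as well. Doing this first for such a v and then for a vertex w of the resulting ear that
  misses some lower facet gives two ears whose projections differ in w. Upper facets are
  handled by reversing the vertical direction.\<close>

lemma affine_hull_facet_eq_hyperplane:
  fixes Q :: "'a::euclidean_space set"
  assumes "aff_dim Q = int DIM('a)" "G facet_of Q" "a \<noteq> 0" "G \<subseteq> {x. a \<bullet> x = b}"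
  shows "affine hull G = {x. a \<bullet> x = b}"
proof (rule affine_dim_equal)
  show "affine hull G \<subseteq> {x. a \<bullet> x = b}"
    by (rule hull_minimal) (use assms(4) affine_hyperplane in auto)
  show "affine hull G \<noteq> {}" using assms(2) by (auto simp: facet_of_def)
  show "aff_dim (affine hull G) = aff_dim {x. a \<bullet> x = b}"
    using assms(1-3) by (simp add: facet_of_def)
qed (simp_all add: affine_hyperplane)

lemma facet_of_convex_hull_eqI:
  fixes S :: "'a::euclidean_space set"
  assumes "finite S" and F: "F facet_of convex hull S" and G: "G facet_of convex hull S"
    and "S \<inter> F \<subseteq> G"
  shows "F = G"
proof -
  obtain S' where S': "S' \<subseteq> S" "F = convex hull S'"
    using face_of_convex_hull_subset[OF finite_imp_compact[OF \<open>finite S\<close>] facet_of_imp_face_of[OF F]]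
    by blast
  have "S' \<subseteq> G" using S' hull_subset[of S' convex] assms(4) by blast
  moreover have "convex G" using G face_of_imp_convex facet_of_imp_face_of by blast
  ultimately have "F \<subseteq> G" unfolding S'(2) by (rule hull_minimal)
  then have "F face_of G"
    using face_of_subset facet_of_imp_face_of[OF F] facet_of_imp_subset[OF G] by blast
  show "F = G"
  proof (rule ccontr)
    assume "F \<noteq> G"
    then have "aff_dim F < aff_dim G"
      using face_of_aff_dim_lt[OF \<open>convex G\<close> \<open>F face_of G\<close>] F by (auto simp: facet_of_def)
    then show False using F G by (simp add: facet_of_def)
  qed
qed

lemma interior_Union_closed_empty:
  fixes \<F> :: "'a::real_normed_vector set set"
  assumes "finite \<F>" "\<And>S. S \<in> \<F> \<Longrightarrow> closed S \<and> interior S = {}"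
  shows "interior (\<Union>\<F>) = {}"
  using assms by (induction \<F> rule: finite_induct) (auto simp: interior_closed_Un_empty_interior)

lemma not_visible_from_if_inner_le:
  fixes Q :: "'a::euclidean_space set"
  assumes Q: "Q \<subseteq> {x. a \<bullet> x \<le> b}" and "a \<noteq> 0" and G: "G \<subseteq> {x. a \<bullet> x = b}"
    and C: "C \<in> interior Q" and A: "a \<bullet> A \<le> a \<bullet> C"
  shows "\<not> visible_from Q G A"
proof
  assume "visible_from Q G A"
  then obtain a' b' where a': "affine hull G = {x. a' \<bullet> x = b'}"
      "Q \<subseteq> {x. a' \<bullet> x \<le> b'}" "a' \<bullet> A > b'"
    unfolding visible_from_def by blast
  have aC: "a \<bullet> C < b" using interior_mono[OF Q] C \<open>a \<noteq> 0\<close> by auto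
  have a'C: "a' \<bullet> C \<le> b'" using a'(2) C interior_subset by blast
  txt \<open>The segment from C to A crosses the hyperplane of G, but a does not increase along it.\<close>
  define u where "u = (b' - a' \<bullet> C) / (a' \<bullet> A - a' \<bullet> C)"
  have den: "a' \<bullet> A - a' \<bullet> C > 0" using a'C a'(3) by linarith
  have "0 \<le> u" using den a'C by (simp add: u_def)
  define y where "y = C + u *\<^sub>R (A - C)"
  have "a' \<bullet> y = b'" using den by (simp add: y_def u_def inner_add_right inner_diff_right)
  moreover have "affine hull G \<subseteq> {x. a \<bullet> x = b}"
    by (rule hull_minimal) (use G affine_hyperplane in auto)
  ultimately have "a \<bullet> y = b" using a'(1) by auto
  moreover have "a \<bullet> y = a \<bullet> C + u * (a \<bullet> A - a \<bullet> C)"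
    by (simp add: y_def inner_add_right inner_diff_right)
  moreover have "u * (a \<bullet> A - a \<bullet> C) \<le> 0" using \<open>0 \<le> u\<close> A by (simp add: mult_nonneg_nonpos)
  ultimately show False using aC by linarith
qed

text \<open>For \<sigma> = 1 the side facets defined below are the lower facets of Q, for \<sigma> = -1 the upper
  ones.\<close>
locale vertical_shelling =
  fixes Q :: "('a::euclidean_space \<times> real) set" and S :: "('a \<times> real) set" and \<sigma> :: real
  assumes finite_S: "finite S" and Q_eq_hull: "Q = convex hull S"
    and interior_Q_nonempty: "interior Q \<noteq> {}"
    and vertical_fiber: "\<And>z s. z \<in> Q \<Longrightarrow> s \<in> S \<Longrightarrow> fst z = fst s \<Longrightarrow> z = s"
    and sign: "\<sigma> \<in> {1, -1}"
begin

definition side_facet :: "('a \<times> real) set \<Rightarrow> bool" where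
  "side_facet G \<longleftrightarrow> G facet_of Q \<and>
     (\<exists>a b. \<sigma> * snd a < 0 \<and> Q \<subseteq> {x. a \<bullet> x \<le> b} \<and> G = Q \<inter> {x. a \<bullet> x = b})"

definition facet_eqn :: "('a \<times> real) set \<Rightarrow> ('a \<times> real) \<times> real" where
  "facet_eqn G = (SOME ab. \<sigma> * snd (fst ab) < 0 \<and> Q \<subseteq> {x. fst ab \<bullet> x \<le> snd ab}
        \<and> G = Q \<inter> {x. fst ab \<bullet> x = snd ab})"

text \<open>The affine function whose graph is the hyperplane spanned by a side facet.\<close>
definition facet_height :: "('a \<times> real) set \<Rightarrow> 'a \<Rightarrow> real" where
  "facet_height G y =
     (snd (facet_eqn G) - fst (fst (facet_eqn G)) \<bullet> y) / snd (fst (facet_eqn G))"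

lemma sign_mult_self: "\<sigma> * \<sigma> = 1"
  using sign by auto

lemma abs_sign_mult: "\<bar>\<sigma> * r\<bar> = \<bar>r\<bar>"
  using sign by (auto simp: abs_mult)

lemma polyhedron_Q: "polyhedron Q"
  using finite_S by (simp add: Q_eq_hull polytope_convex_hull polytope_imp_polyhedron)

lemma convex_Q: "convex Q"
  by (simp add: Q_eq_hull)

lemma compact_Q: "compact Q"
  using finite_S by (simp add: Q_eq_hull polytope_convex_hull polytope_imp_compact)

lemma closed_Q: "closed Q"
  by (simp add: compact_Q compact_imp_closed)

lemma affine_hull_Q: "affine hull Q = UNIV"
  using interior_Q_nonempty affine_hull_nonempty_interior by blast

lemma aff_dim_Q: "aff_dim Q = int DIM('a \<times> real)"
  using affine_hull_Q aff_dim_eq_full by blast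

lemma S_subset_Q: "S \<subseteq> Q"
  by (simp add: Q_eq_hull hull_subset)

lemma side_facet_facet_of: "side_facet G \<Longrightarrow> G facet_of Q"
  by (simp add: side_facet_def)

lemma finite_side_facets: "finite {G. side_facet G}"
  by (rule finite_subset[OF _ finite_polyhedron_facets[OF polyhedron_Q]])
    (auto simp: side_facet_def)

lemma side_facet_eqn:
  assumes "side_facet G"
  shows "\<sigma> * snd (fst (facet_eqn G)) < 0" "Q \<subseteq> {x. fst (facet_eqn G) \<bullet> x \<le> snd (facet_eqn G)}"
    "G = Q \<inter> {x. fst (facet_eqn G) \<bullet> x = snd (facet_eqn G)}"
proof -
  from assms obtain a b where "\<sigma> * snd a < 0 \<and> Q \<subseteq> {x. a \<bullet> x \<le> b} \<and> G = Q \<inter> {x. a \<bullet> x = b}"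
    by (auto simp: side_facet_def)
  then have "\<exists>ab. \<sigma> * snd (fst ab) < 0 \<and> Q \<subseteq> {x. fst ab \<bullet> x \<le> snd ab}
        \<and> G = Q \<inter> {x. fst ab \<bullet> x = snd ab}"
    by (intro exI[of _ "(a, b)"]) auto
  from someI_ex[OF this]
  show "\<sigma> * snd (fst (facet_eqn G)) < 0" "Q \<subseteq> {x. fst (facet_eqn G) \<bullet> x \<le> snd (facet_eqn G)}"
    "G = Q \<inter> {x. fst (facet_eqn G) \<bullet> x = snd (facet_eqn G)}"
    unfolding facet_eqn_def by auto
qed

lemma facet_eqn_nonzero: "side_facet G \<Longrightarrow> fst (facet_eqn G) \<noteq> 0"
  using side_facet_eqn(1)[of G] by (auto simp: zero_prod_def)

lemma facet_eqn_iff_height: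
  assumes "side_facet G"
  shows "fst (facet_eqn G) \<bullet> z = snd (facet_eqn G) \<longleftrightarrow> snd z = facet_height G (fst z)"
    and "fst (facet_eqn G) \<bullet> z \<le> snd (facet_eqn G) \<longleftrightarrow> \<sigma> * facet_height G (fst z) \<le> \<sigma> * snd z"
    and "fst (facet_eqn G) \<bullet> z < snd (facet_eqn G) \<longleftrightarrow> \<sigma> * facet_height G (fst z) < \<sigma> * snd z"
proof -
  obtain a t b where eqn: "facet_eqn G = ((a, t), b)" by (metis prod.collapse)
  obtain y s where z: "z = (y, s)" by (cases z)
  have t: "\<sigma> * t < 0" using side_facet_eqn(1)[OF assms] eqn by simp
  then have "t \<noteq> 0" by auto
  have key: "a \<bullet> y + t * s - b = t * (s - facet_height G y)"
    using \<open>t \<noteq> 0\<close> by (simp add: facet_height_def eqn field_simps)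
  show "fst (facet_eqn G) \<bullet> z = snd (facet_eqn G) \<longleftrightarrow> snd z = facet_height G (fst z)"
    using key \<open>t \<noteq> 0\<close> by (simp add: eqn z) (smt (verit) mult_eq_0_iff)
  have "a \<bullet> y + t * s \<le> b \<longleftrightarrow> t * (s - facet_height G y) \<le> 0" using key by linarith
  also have "\<dots> \<longleftrightarrow> \<sigma> * facet_height G y \<le> \<sigma> * s"
    using sign t by (auto simp: mult_le_0_iff algebra_simps)
  finally show "fst (facet_eqn G) \<bullet> z \<le> snd (facet_eqn G) \<longleftrightarrow> \<sigma> * facet_height G (fst z) \<le> \<sigma> * snd z"
    by (simp add: eqn z)
  have "a \<bullet> y + t * s < b \<longleftrightarrow> t * (s - facet_height G y) < 0" using key by linarith
  also have "\<dots> \<longleftrightarrow> \<sigma> * facet_height G y < \<sigma> * s"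
    using sign t by (auto simp: mult_less_0_iff algebra_simps)
  finally show "fst (facet_eqn G) \<bullet> z < snd (facet_eqn G) \<longleftrightarrow> \<sigma> * facet_height G (fst z) < \<sigma> * snd z"
    by (simp add: eqn z)
qed

lemma affine_hull_side_facet_eqn:
  assumes "side_facet G"
  shows "affine hull G = {x. fst (facet_eqn G) \<bullet> x = snd (facet_eqn G)}"
  using assms side_facet_eqn[OF assms] facet_eqn_nonzero[OF assms]
  by (intro affine_hull_facet_eq_hyperplane[OF aff_dim_Q]) (auto simp: side_facet_def)

lemma affine_hull_side_facet:
  assumes "side_facet G"
  shows "affine hull G = {z. snd z = facet_height G (fst z)}"
  using affine_hull_side_facet_eqn[OF assms] facet_eqn_iff_height(1)[OF assms] by auto

lemma facet_height_le: "side_facet G \<Longrightarrow> z \<in> Q \<Longrightarrow> \<sigma> * facet_height G (fst z) \<le> \<sigma> * snd z"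
  using side_facet_eqn(2) facet_eqn_iff_height(2) by blast

lemma mem_side_facet_iff: "side_facet G \<Longrightarrow> z \<in> Q \<Longrightarrow> z \<in> G \<longleftrightarrow> snd z = facet_height G (fst z)"
  using side_facet_eqn(3) facet_eqn_iff_height(1) by blast

lemma facet_height_less:
  assumes "side_facet G" "z \<in> interior Q"
  shows "\<sigma> * facet_height G (fst z) < \<sigma> * snd z"
proof -
  have "z \<in> interior {x. fst (facet_eqn G) \<bullet> x \<le> snd (facet_eqn G)}"
    using interior_mono[OF side_facet_eqn(2)[OF assms(1)]] assms(2) by blast
  then show ?thesis
    using facet_eqn_nonzero[OF assms(1)] facet_eqn_iff_height(3)[OF assms(1)] by simp
qed

lemma facet_height_eq:
  "facet_height G y = snd (facet_eqn G) / snd (fst (facet_eqn G))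
     - (fst (fst (facet_eqn G)) /\<^sub>R snd (fst (facet_eqn G))) \<bullet> y"
  by (simp add: facet_height_def diff_divide_distrib divide_inverse algebra_simps)

lemma continuous_on_facet_height: "continuous_on UNIV (facet_height G)"
  unfolding facet_height_eq by (intro continuous_intros)

lemma side_facet_eqI:
  assumes "side_facet G" "side_facet G'" "\<And>y. facet_height G y = facet_height G' y"
  shows "G = G'"
proof -
  have "G \<subseteq> Q" "G' \<subseteq> Q" using assms(1,2) by (auto dest: side_facet_facet_of facet_of_imp_subset)
  moreover have "z \<in> G \<longleftrightarrow> z \<in> G'" if "z \<in> Q" for z
    using mem_side_facet_iff[OF assms(1) that] mem_side_facet_iff[OF assms(2) that] assms(3) by simp
  ultimately show ?thesis by blast
qed

lemma visible_from_below_iff: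
  assumes C: "(x, h) \<in> interior Q" and "T > 0"
    and T: "\<And>G. side_facet G \<Longrightarrow> \<sigma> * (h - facet_height G x) < T"
    and G: "G facet_of Q"
  shows "visible_from Q G (x, h - \<sigma> * T) \<longleftrightarrow> side_facet G"
proof
  assume sG: "side_facet G"
  have "\<not> \<sigma> * facet_height G x \<le> \<sigma> * (h - \<sigma> * T)"
    using T[OF sG] sign_mult_self by (simp add: algebra_simps)
  then have "fst (facet_eqn G) \<bullet> (x, h - \<sigma> * T) > snd (facet_eqn G)"
    using facet_eqn_iff_height(2)[OF sG, of "(x, h - \<sigma> * T)"] by auto
  then show "visible_from Q G (x, h - \<sigma> * T)"
    unfolding visible_from_def
    using facet_eqn_nonzero[OF sG] affine_hull_side_facet_eqn[OF sG] side_facet_eqn(2)[OF sG]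
    by blast
next
  assume vis: "visible_from Q G (x, h - \<sigma> * T)"
  obtain a b where ab: "a \<noteq> 0" "Q \<subseteq> {z. a \<bullet> z \<le> b}" "G = Q \<inter> {z. a \<bullet> z = b}"
    using facet_of_polyhedron[OF polyhedron_Q G] by metis
  show "side_facet G"
  proof (rule ccontr)
    assume "\<not> side_facet G"
    moreover have "side_facet G" if "\<sigma> * snd a < 0"
      unfolding side_facet_def using G ab that by (intro conjI exI[of _ a] exI[of _ b]) auto
    ultimately have "\<sigma> * snd a \<ge> 0" by linarith
    moreover have "a \<bullet> (x, h - \<sigma> * T) = a \<bullet> (x, h) - T * (\<sigma> * snd a)"
      by (cases a) (simp add: algebra_simps)
    ultimately have "a \<bullet> (x, h - \<sigma> * T) \<le> a \<bullet> (x, h)"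
      using \<open>T > 0\<close> by (simp add: mult_nonneg_nonneg)
    moreover have "G \<subseteq> {z. a \<bullet> z = b}" using ab(3) by blast
    ultimately show False
      using not_visible_from_if_inner_le[OF ab(2,1) _ C] vis by blast
  qed
qed

lemma vertical_segment_inter_side_facet:
  assumes C: "(x, h) \<in> interior Q" and G: "side_facet G"
    and T: "\<sigma> * (h - facet_height G x) < T"
  shows "closed_segment (x, h) (x, h - \<sigma> * T) \<inter> affine hull G = {(x, facet_height G x)}"
proof
  have cs: "closed_segment (x, h) (x, h - \<sigma> * T) = {(x, h - u * \<sigma> * T) | u. 0 \<le> u \<and> u \<le> 1}"
    unfolding closed_segment_def by (auto simp: algebra_simps)
  show "closed_segment (x, h) (x, h - \<sigma> * T) \<inter> affine hull G \<subseteq> {(x, facet_height G x)}"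
    unfolding cs affine_hull_side_facet[OF G] by auto
  have pos: "0 < \<sigma> * (h - facet_height G x)"
    using facet_height_less[OF G C] by (simp add: algebra_simps)
  then have "T > 0" using T by linarith
  define u where "u = \<sigma> * (h - facet_height G x) / T"
  have "0 \<le> u" "u \<le> 1" using pos T \<open>T > 0\<close> by (auto simp: u_def)
  moreover have "h - u * \<sigma> * T = facet_height G x"
    using \<open>T > 0\<close> sign_mult_self by (simp add: u_def field_simps) (simp add: algebra_simps flip: mult.assoc)
  ultimately have "(x, facet_height G x) \<in> closed_segment (x, h) (x, h - \<sigma> * T)"
    unfolding cs by (smt (verit) mem_Collect_eq)
  then show "{(x, facet_height G x)} \<subseteq> closed_segment (x, h) (x, h - \<sigma> * T) \<inter> affine hull G"
    unfolding affine_hull_side_facet[OF G] by simp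
qed

text \<open>Shooting straight down (for \<sigma> = 1) from an interior point over x, the side facets are
  crossed in the order of decreasing height at x; x must separate all the heights.\<close>
lemma BM_last_if_extremal_height:
  assumes C: "(x, h) \<in> interior Q"
    and distinct: "\<And>G G'. side_facet G \<Longrightarrow> side_facet G' \<Longrightarrow>
                    facet_height G x = facet_height G' x \<Longrightarrow> G = G'"
    and F: "side_facet F"
    and extremal: "\<And>G. side_facet G \<Longrightarrow> \<sigma> * facet_height F x \<le> \<sigma> * facet_height G x"
  shows "BM_last Q side_facet F"
proof -
  define T where "T = 1 + (\<Sum>G\<in>{G. side_facet G}. \<bar>h - facet_height G x\<bar>)"
  have "T > 0" unfolding T_def by (smt (verit) sum_nonneg abs_ge_zero)
  have T: "\<sigma> * (h - facet_height G x) < T" if "side_facet G" for G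
  proof -
    have "\<bar>h - facet_height G x\<bar> \<le> (\<Sum>G\<in>{G. side_facet G}. \<bar>h - facet_height G x\<bar>)"
      by (rule member_le_sum) (use that finite_side_facets in auto)
    then show ?thesis
      using abs_sign_mult[of "h - facet_height G x"] abs_ge_self[of "\<sigma> * (h - facet_height G x)"]
      by (simp add: T_def)
  qed
  define p where "p G = (x, facet_height G x)" for G
  have "inj_on p {G. side_facet G}"
    by (rule inj_onI) (use distinct in \<open>auto simp: p_def\<close>)
  have dist_p: "dist (x, h) (p G) = \<sigma> * (h - facet_height G x)" if "side_facet G" for G
  proof -
    have "dist (x, h) (p G) = \<bar>h - facet_height G x\<bar>"
      by (simp add: p_def dist_Pair_Pair dist_real_def)
    moreover have "0 < \<sigma> * (h - facet_height G x)"
      using facet_height_less[OF that C] by (simp add: algebra_simps)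
    ultimately show ?thesis using abs_sign_mult[of "h - facet_height G x"] by linarith
  qed
  have last: "dist (x, h) (p G) < dist (x, h) (p F)" if "side_facet G" "G \<noteq> F" for G
  proof -
    have "\<sigma> * facet_height F x \<noteq> \<sigma> * facet_height G x"
      using distinct[OF F that(1)] that(2) sign by auto
    then have "\<sigma> * facet_height F x < \<sigma> * facet_height G x"
      using extremal[OF that(1)] by linarith
    then show ?thesis
      using dist_p[OF that(1)] dist_p[OF F] by (simp add: algebra_simps)
  qed
  show ?thesis
    unfolding BM_last_def
  proof (intro conjI exI)
    show "side_facet F" "(x, h) \<in> interior Q" "inj_on p {G. side_facet G}"
      by fact+
    show "\<forall>G. G facet_of Q \<longrightarrow> (visible_from Q G (x, h - \<sigma> * T) \<longleftrightarrow> side_facet G)"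
      using visible_from_below_iff[OF C \<open>T > 0\<close> T] by blast
    show "\<forall>G. side_facet G \<longrightarrow> closed_segment (x, h) (x, h - \<sigma> * T) \<inter> affine hull G = {p G}"
      using vertical_segment_inter_side_facet[OF C _ T] by (simp add: p_def)
    show "\<forall>G. side_facet G \<and> G \<noteq> F \<longrightarrow> dist (x, h) (p G) < dist (x, h) (p F)"
      using last by blast
  qed
qed

lemma side_facet_over_interior_point:
  assumes C: "C \<in> interior Q"
  obtains G where "side_facet G" "(fst C, facet_height G (fst C)) \<in> G"
proof -
  obtain B where B: "\<forall>z\<in>Q. norm z \<le> B"
    using compact_imp_bounded[OF compact_Q] bounded_iff by blast
  have CQ: "C \<in> Q" using C interior_subset by blast
  define R where "R = B + norm C + 1"
  have "B \<ge> 0" using B CQ norm_ge_zero by (meson order_trans)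
  then have "R > 0" unfolding R_def using norm_ge_zero[of C] by linarith
  define D where "D = C - (0, \<sigma> * R)"
  have "D \<notin> Q"
  proof
    assume "D \<in> Q"
    then have "norm D \<le> B" using B by blast
    moreover have "\<bar>snd D\<bar> \<le> norm D" using norm_snd_le[of "snd D" "fst D"] by simp
    moreover have "\<bar>snd C\<bar> \<le> norm C" using norm_snd_le[of "snd C" "fst C"] by simp
    moreover have "snd D = snd C - \<sigma> * R" by (simp add: D_def)
    moreover have "\<bar>\<sigma> * R\<bar> = R" using abs_sign_mult \<open>R > 0\<close> by simp
    ultimately show False unfolding R_def by linarith
  qed
  then have "closed_segment C D \<inter> frontier Q \<noteq> {}"
    using CQ by (intro connected_Int_frontier) auto
  then obtain q where q: "q \<in> closed_segment C D" "q \<in> frontier Q" by blast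
  have qQ: "q \<in> Q - interior Q" using q(2) closed_Q by (simp add: frontier_def)
  then have "q \<in> Q - rel_interior Q" using rel_interior_interior[OF affine_hull_Q] by simp
  then obtain G where G: "G facet_of Q" "q \<in> G"
    using rel_boundary_of_polyhedron[OF polyhedron_Q] by blast
  obtain a b where ab: "a \<noteq> 0" "Q \<subseteq> {x. a \<bullet> x \<le> b}" "G = Q \<inter> {x. a \<bullet> x = b}"
    using facet_of_polyhedron[OF polyhedron_Q G(1)] by metis
  obtain u where u: "0 \<le> u" "u \<le> 1" "q = (1 - u) *\<^sub>R C + u *\<^sub>R D"
    using q(1) unfolding closed_segment_def by blast
  have "u \<noteq> 0" using u qQ C by auto
  have "a \<bullet> C < b" using interior_mono[OF ab(2)] C ab(1) by auto
  moreover have "a \<bullet> q = b" using G(2) ab(3) by auto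
  moreover have "a \<bullet> q = a \<bullet> C - u * R * (\<sigma> * snd a)"
    by (cases a) (simp add: u(3) D_def algebra_simps inner_diff_right)
  ultimately have "u * R * (\<sigma> * snd a) < 0" by linarith
  then have "\<sigma> * snd a < 0"
    using u(1) \<open>u \<noteq> 0\<close> \<open>R > 0\<close> by (simp add: mult_less_0_iff zero_less_mult_iff)
  then have sG: "side_facet G"
    unfolding side_facet_def using G(1) ab by (intro conjI exI[of _ a] exI[of _ b]) auto
  have "fst q = fst C" by (simp add: u(3) D_def algebra_simps)
  moreover have "snd q = facet_height G (fst q)" using mem_side_facet_iff[OF sG] G(2) qQ by blast
  ultimately have "(fst C, facet_height G (fst C)) = q" by (metis prod.collapse)
  then show ?thesis using that sG G(2) by blast
qed

text \<open>The points over a segment from the interior to s that lie on some side facet form a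
  closed set containing the whole half-open segment, hence also s.\<close>
lemma side_facet_through_point:
  assumes s: "s \<in> S"
  obtains G where "side_facet G" "s \<in> G"
proof -
  obtain C0 where C0: "C0 \<in> interior Q" using interior_Q_nonempty by blast
  have sQ: "s \<in> Q" using s S_subset_Q by blast
  define C where "C t = (1 - t) *\<^sub>R C0 + t *\<^sub>R s" for t :: real
  have C_interior: "C t \<in> interior Q" if "t \<in> {0..<1}" for t
  proof (cases "t = 0 \<or> C0 = s")
    case True
    then show ?thesis using C0 by (auto simp: C_def algebra_simps)
  next
    case False
    then have "C t \<in> open_segment C0 s"
      using that unfolding C_def in_segment by (intro conjI exI[of _ t]) auto
    moreover have "s \<in> closure Q" using sQ closure_subset by blast
    ultimately show ?thesis using in_interior_closure_convex_segment[OF convex_Q C0] by blast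
  qed
  define K where "K = (\<Union>G\<in>{G. side_facet G}. (\<lambda>t. (fst (C t), facet_height G (fst (C t)))) -` Q)"
  have "continuous_on UNIV (\<lambda>t. fst (C t))" unfolding C_def by (intro continuous_intros)
  then have "closed K" unfolding K_def
    by (intro closed_UN finite_side_facets ballI closed_vimage closed_Q continuous_on_Pair
        continuous_on_compose2[OF continuous_on_facet_height]) auto
  have "{0..<1} \<subseteq> K"
  proof
    fix t :: real assume "t \<in> {0..<1}"
    then obtain G where "side_facet G" "(fst (C t), facet_height G (fst (C t))) \<in> G"
      using side_facet_over_interior_point[OF C_interior] by blast
    then show "t \<in> K" unfolding K_def using facet_of_imp_subset side_facet_facet_of by blast
  qed
  then have "closure {0..<(1::real)} \<subseteq> K" using \<open>closed K\<close> closure_minimal by blast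
  then have "1 \<in> K" by auto
  then obtain G where G: "side_facet G" "(fst s, facet_height G (fst s)) \<in> Q"
    unfolding K_def C_def by auto
  then have "(fst s, facet_height G (fst s)) = s" using vertical_fiber[OF _ s] by simp
  then have "s \<in> G" using mem_side_facet_iff[OF G(1) sQ] by (metis snd_conv)
  then show ?thesis using that G(1) by blast
qed

lemma interior_facet_height_coincidence:
  assumes G: "side_facet G" and G': "side_facet G'" and "G \<noteq> G'"
  shows "interior {y. facet_height G y = facet_height G' y} = {}"
proof -
  define k where "k H = snd (facet_eqn H) / snd (fst (facet_eqn H))" for H
  define d where "d H = fst (fst (facet_eqn H)) /\<^sub>R snd (fst (facet_eqn H))" for H
  have eq: "{y. facet_height G y = facet_height G' y} = {y. (d G' - d G) \<bullet> y = k G' - k G}"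
    by (auto simp: facet_height_eq k_def d_def inner_diff_left)
  show ?thesis
  proof (cases "d G' - d G = 0")
    case True
    have "k G' - k G \<noteq> 0"
    proof
      assume "k G' - k G = 0"
      then have "\<And>y. facet_height G y = facet_height G' y" using eq True by auto
      then show False using side_facet_eqI[OF G G'] \<open>G \<noteq> G'\<close> by blast
    qed
    then show ?thesis unfolding eq using True by simp
  qed (simp add: eq)
qed

definition height_coincidences :: "'a set" where
  "height_coincidences = {y. \<exists>G G'. side_facet G \<and> side_facet G' \<and> G \<noteq> G' \<and>
                              facet_height G y = facet_height G' y}"

text \<open>Distinct side facets have distinct affine heights, so each pairwise coincidence set is
  empty or a hyperplane.\<close>
lemma interior_height_coincidences: "interior height_coincidences = {}"
proof -
  define \<B> where "\<B> = (\<lambda>(G, G'). {y. facet_height G y = facet_height G' y}) `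
                      {(G, G'). side_facet G \<and> side_facet G' \<and> G \<noteq> G'}"
  have "height_coincidences = \<Union>\<B>" unfolding height_coincidences_def \<B>_def by blast
  moreover have "finite \<B>" unfolding \<B>_def
    by (rule finite_imageI, rule finite_subset[of _ "{G. side_facet G} \<times> {G. side_facet G}"])
      (use finite_side_facets in auto)
  then have "interior (\<Union>\<B>) = {}"
  proof (rule interior_Union_closed_empty)
    fix B assume "B \<in> \<B>"
    then obtain G G' where "side_facet G" "side_facet G'" "G \<noteq> G'"
      and B: "B = {y. facet_height G y = facet_height G' y}"
      unfolding \<B>_def by blast
    have "closed B" unfolding B by (intro closed_Collect_eq continuous_on_facet_height)
    moreover have "interior B = {}"
      unfolding B by (rule interior_facet_height_coincidence) fact+
    ultimately show "closed B \<and> interior B = {}" by blast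
  qed
  ultimately show ?thesis by simp
qed

lemma fst_in_closure_fst_interior:
  assumes "z \<in> Q"
  shows "fst z \<in> closure (fst ` interior Q)"
proof -
  have "z \<in> closure (interior Q)"
    using convex_closure_interior[OF convex_Q interior_Q_nonempty] assms closure_subset by blast
  moreover have "fst ` closure (interior Q) \<subseteq> closure (fst ` interior Q)"
  proof (rule image_closure_subset)
    show "fst ` interior Q \<subseteq> closure (fst ` interior Q)" by (rule closure_subset)
  qed (auto intro: continuous_intros)
  ultimately show ?thesis by blast
qed

lemma generic_point_near:
  assumes s: "s \<in> S" and "\<epsilon> > 0"
  obtains x h where "(x, h) \<in> interior Q"
    and "\<And>G. side_facet G \<Longrightarrow> \<bar>facet_height G x - facet_height G (fst s)\<bar> < \<epsilon>"
    and "x \<notin> height_coincidences"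
proof -
  define U where "U = fst ` interior Q"
  have "open U" unfolding U_def by (intro open_image_fst open_interior)
  define W where "W = (\<Inter>G\<in>{G. side_facet G}. {y. \<bar>facet_height G y - facet_height G (fst s)\<bar> < \<epsilon>})"
  have "open W" unfolding W_def
    by (intro open_INT finite_side_facets ballI open_Collect_less continuous_intros
        continuous_on_compose2[OF continuous_on_facet_height]) auto
  moreover have "fst s \<in> W" using \<open>\<epsilon> > 0\<close> by (simp add: W_def)
  ultimately have "W \<inter> U \<noteq> {}"
    using open_Int_closure_eq_empty[of W U] fst_in_closure_fst_interior s S_subset_Q
    unfolding U_def by blast
  moreover have "W \<inter> U \<subseteq> interior height_coincidences" if "W \<inter> U \<subseteq> height_coincidences"
    using that \<open>open W\<close> \<open>open U\<close> by (intro interior_maximal) auto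
  ultimately obtain x where x: "x \<in> W" "x \<in> U" "x \<notin> height_coincidences"
    using interior_height_coincidences by blast
  then obtain h where "(x, h) \<in> interior Q" unfolding U_def by force
  then show ?thesis using that x(1,3) unfolding W_def by blast
qed

lemma BM_last_extremal_side_facet:
  assumes C: "(x, h) \<in> interior Q"
    and generic: "x \<notin> height_coincidences" and "side_facet G0"
  obtains F where "side_facet F" "BM_last Q side_facet F"
    and "\<And>G. side_facet G \<Longrightarrow> \<sigma> * facet_height F x \<le> \<sigma> * facet_height G x"
proof -
  define m where "m = Min ((\<lambda>G. \<sigma> * facet_height G x) ` {G. side_facet G})"
  have "m \<in> (\<lambda>G. \<sigma> * facet_height G x) ` {G. side_facet G}"
    unfolding m_def using finite_side_facets \<open>side_facet G0\<close> by (intro Min_in) auto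
  then obtain F where F: "side_facet F" "\<sigma> * facet_height F x = m" by blast
  have extremal: "\<sigma> * facet_height F x \<le> \<sigma> * facet_height G x" if "side_facet G" for G
    unfolding F(2) m_def using finite_side_facets that by (intro Min_le) auto
  have "G = G'" if "side_facet G" "side_facet G'" "facet_height G x = facet_height G' x" for G G'
    using generic that unfolding height_coincidences_def by blast
  with C have "BM_last Q side_facet F"
    using F(1) extremal by (rule BM_last_if_extremal_height)
  then show ?thesis using that F(1) extremal by blast
qed

lemma BM_last_avoiding_point:
  assumes s: "s \<in> S" and G1: "side_facet G1" "s \<notin> G1"
  obtains F where "side_facet F" "BM_last Q side_facet F" "s \<notin> F"
proof -
  have sQ: "s \<in> Q" using s S_subset_Q by blast
  define \<epsilon> where "\<epsilon> = \<sigma> * snd s - \<sigma> * facet_height G1 (fst s)"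
  have "\<sigma> * facet_height G1 (fst s) \<noteq> \<sigma> * snd s"
    using mem_side_facet_iff[OF G1(1) sQ] G1(2) sign by auto
  then have "\<epsilon> > 0" using facet_height_le[OF G1(1) sQ] unfolding \<epsilon>_def by linarith
  then obtain x h where C: "(x, h) \<in> interior Q"
    and near: "\<And>G. side_facet G \<Longrightarrow> \<bar>facet_height G x - facet_height G (fst s)\<bar> < \<epsilon> / 2"
    and generic: "x \<notin> height_coincidences"
    using generic_point_near[OF s, of "\<epsilon> / 2"] by auto
  obtain F where F: "side_facet F" "BM_last Q side_facet F"
    and extremal: "\<And>G. side_facet G \<Longrightarrow> \<sigma> * facet_height F x \<le> \<sigma> * facet_height G x"
    using BM_last_extremal_side_facet[OF C generic G1(1)] by blast
  have close: "\<bar>\<sigma> * facet_height G x - \<sigma> * facet_height G (fst s)\<bar> < \<epsilon> / 2"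
    if "side_facet G" for G
    using near[OF that] abs_sign_mult[of "facet_height G x - facet_height G (fst s)"]
    by (simp add: right_diff_distrib)
  have "s \<notin> F"
  proof
    assume "s \<in> F"
    then have "\<sigma> * facet_height F (fst s) = \<sigma> * snd s"
      using mem_side_facet_iff[OF F(1) sQ] by simp
    then show False
      using close[OF F(1)] close[OF G1(1)] extremal[OF G1(1)] unfolding \<epsilon>_def
      by argo
  qed
  then show ?thesis using that F by blast
qed

text \<open>Starting from a point s of S off some side facet gives an ear F1 avoiding s. Some point w
  of S in F1 misses some side facet (otherwise every side facet would contain F1, hence equal it,
  although s lies on one of them), and an ear avoiding w has a different shadow.\<close>
lemma two_BM_last_distinct_shadows:
  assumes "S \<noteq> {}"
  obtains F1 F2 where "BM_last Q side_facet F1" "BM_last Q side_facet F2" "fst ` F1 \<noteq> fst ` F2"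
proof -
  obtain G0 where G0: "side_facet G0"
    using side_facet_through_point \<open>S \<noteq> {}\<close> by blast
  have "\<not> S \<subseteq> G0"
  proof
    assume "S \<subseteq> G0"
    moreover have "convex G0"
      using G0 face_of_imp_convex facet_of_imp_face_of side_facet_facet_of by blast
    ultimately have "Q \<subseteq> G0" unfolding Q_eq_hull by (rule hull_minimal)
    then show False using G0 facet_of_imp_subset side_facet_facet_of by fastforce
  qed
  then obtain s where s: "s \<in> S" "s \<notin> G0" by blast
  obtain F1 where F1: "side_facet F1" "BM_last Q side_facet F1" "s \<notin> F1"
    using BM_last_avoiding_point[OF s(1) G0 s(2)] by blast
  have "\<exists>w\<in>S \<inter> F1. \<exists>G. side_facet G \<and> w \<notin> G"
  proof (rule ccontr)
    assume "\<not> ?thesis"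
    then have "G = F1" if "side_facet G" for G
      using facet_of_convex_hull_eqI[OF finite_S] F1(1) that
      by (metis Q_eq_hull side_facet_facet_of subsetI)
    moreover obtain G where "side_facet G" "s \<in> G"
      using side_facet_through_point[OF s(1)] by blast
    ultimately show False using F1(3) by blast
  qed
  then obtain w G where w: "w \<in> S" "w \<in> F1" "side_facet G" "w \<notin> G" by blast
  obtain F2 where F2: "side_facet F2" "BM_last Q side_facet F2" "w \<notin> F2"
    using BM_last_avoiding_point[OF w(1,3,4)] by blast
  have "fst w \<notin> fst ` F2"
  proof
    assume "fst w \<in> fst ` F2"
    then obtain z where "z \<in> F2" "fst z = fst w" by auto
    moreover have "z \<in> Q" using \<open>z \<in> F2\<close> F2(1) facet_of_imp_subset side_facet_facet_of by blast
    ultimately show False using vertical_fiber[of z w] w(1) F2(3) by blast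
  qed
  then have "fst ` F1 \<noteq> fst ` F2" using w(2) by blast
  then show ?thesis using that F1(2) F2(2) by blast
qed

end

lemma finite_vertices: "polytope P \<Longrightarrow> finite (vertices P)"
  using finite_polyhedron_extreme_points[OF polytope_imp_polyhedron] by (simp add: vertices_def)

lemma convex_hull_vertices:
  assumes "convex P" "polytope P"
  shows "convex hull (vertices P) = P"
  using Krein_Milman_Minkowski[OF polytope_imp_compact[OF assms(2)] assms(1)]
  by (simp add: vertices_def)

lemma card_vertices_ge:
  fixes P :: "'a::euclidean_space set"
  assumes "convex P" "polytope P" "aff_dim P = int DIM('a)" "\<not> int DIM('a) simplex P"
  shows "card (vertices P) \<ge> DIM('a) + 2"
proof (rule ccontr)
  let ?V = "vertices P"
  have V: "finite ?V" "convex hull ?V = P"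
    using assms(1,2) by (simp_all add: finite_vertices convex_hull_vertices)
  then have "aff_dim ?V = int DIM('a)" using assms(3) by (metis aff_dim_convex_hull)
  moreover assume "\<not> card ?V \<ge> DIM('a) + 2"
  moreover have "aff_dim ?V \<le> int (card ?V) - 1" using aff_dim_le_card[OF V(1)] by simp
  ultimately have card: "int (card ?V) = int DIM('a) + 1" by linarith
  then have "\<not> affine_dependent ?V"
    using affine_independent_iff_card[of ?V] V(1) \<open>aff_dim ?V = _\<close> by linarith
  then have "int DIM('a) simplex P" unfolding simplex_def using V(2) card by blast
  then show False using assms(4) by blast
qed

text \<open>The classical correspondence between spheres and non-vertical hyperplanes under the
  lifting map: a \<bullet> x + t |x|^2 = b describes a sphere for t \<noteq> 0.\<close>
lemma cospherical_if_lift_in_hyperplane: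
  fixes V :: "'a::euclidean_space set"
  assumes "aff_dim V = int DIM('a)" "a \<noteq> 0" "lift ` V \<subseteq> {x. a \<bullet> x = b}"
  obtains c r where "V \<subseteq> sphere c r"
proof -
  obtain ax t where a: "a = (ax, t)" by (cases a)
  have eq: "ax \<bullet> v + t * (norm v)\<^sup>2 = b" if "v \<in> V" for v
    using assms(3) that by (auto simp: lift_def a)
  have "t \<noteq> 0"
  proof
    assume "t = 0"
    then have "ax \<noteq> 0" using assms(2) a by (auto simp: zero_prod_def)
    have "V \<subseteq> {x. ax \<bullet> x = b}" using eq \<open>t = 0\<close> by auto
    then have "aff_dim V \<le> aff_dim {x. ax \<bullet> x = b}" by (rule aff_dim_subset)
    then show False using assms(1) \<open>ax \<noteq> 0\<close> by simp
  qed
  define c where "c = - (1 / (2 * t)) *\<^sub>R ax"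
  define K where "K = b / t + (norm c)\<^sup>2"
  have "dist c v = sqrt K" if "v \<in> V" for v
  proof -
    have "(norm (v - c))\<^sup>2 = (norm v)\<^sup>2 - 2 * (c \<bullet> v) + (norm c)\<^sup>2"
      by (simp add: power2_norm_eq_inner inner_diff_left inner_diff_right inner_commute)
    also have "c \<bullet> v = - (ax \<bullet> v) / (2 * t)" by (simp add: c_def)
    also have "ax \<bullet> v = b - t * (norm v)\<^sup>2" using eq[OF that] by simp
    finally have "(norm (v - c))\<^sup>2 = K" using \<open>t \<noteq> 0\<close> by (simp add: K_def field_simps)
    then show ?thesis by (metis dist_norm norm_ge_zero norm_minus_commute real_sqrt_abs abs_of_nonneg)
  qed
  then have "V \<subseteq> sphere c (sqrt K)" by auto
  then show ?thesis by (rule that)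
qed

lemma interior_lifted_polytope_nonempty:
  fixes P :: "'a::euclidean_space set"
  assumes "convex P" "polytope P" "aff_dim P = int DIM('a)" "generic_polytope P"
  shows "interior (lifted_polytope P) \<noteq> {}"
proof -
  let ?V = "vertices P"
  have V: "finite ?V" "convex hull ?V = P"
    using assms(1,2) by (simp_all add: finite_vertices convex_hull_vertices)
  have affV: "aff_dim ?V = int DIM('a)" using assms(3) V(2) by (metis aff_dim_convex_hull)
  have card: "card ?V \<ge> DIM('a) + 2"
    using card_vertices_ge[OF assms(1-3)] assms(4) by (simp add: generic_polytope_def)
  have "affine hull (lift ` ?V) = UNIV"
  proof (rule ccontr)
    assume "affine hull (lift ` ?V) \<noteq> UNIV"
    then have "aff_dim (lift ` ?V) < DIM('a \<times> real)"
      by (metis aff_dim_eq_full aff_dim_le_DIM order_less_le)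
    then obtain a b where "a \<noteq> 0" "lift ` ?V \<subseteq> {x. a \<bullet> x = b}"
      by (rule aff_lowdim_subset_hyperplane)
    then obtain c r where "?V \<subseteq> sphere c r"
      using cospherical_if_lift_in_hyperplane[OF affV] by blast
    moreover obtain W where "W \<subseteq> ?V" "card W = DIM('a) + 2"
      using obtain_subset_with_card_n[OF card] by metis
    ultimately show False using assms(4) unfolding generic_polytope_def by blast
  qed
  moreover have "lift ` ?V \<noteq> {}" using card by auto
  ultimately show ?thesis
    unfolding lifted_polytope_def
    by (metis affine_hull_convex_hull convex_convex_hull convex_hull_eq_empty
        rel_interior_eq_empty rel_interior_interior)
qed

lemma fst_lifted_polytope:
  assumes "convex P" "polytope P"
  shows "fst ` lifted_polytope P = P"
proof -
  have "fst ` lifted_polytope P = convex hull (fst ` lift ` vertices P)"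
    unfolding lifted_polytope_def
    by (rule convex_hull_linear_image) (simp add: bounded_linear_fst bounded_linear.linear)
  also have "fst ` lift ` vertices P = vertices P" by (force simp: lift_def image_image)
  finally show ?thesis using convex_hull_vertices[OF assms] by simp
qed

lemma face_of_vertical_slice:
  fixes K :: "('a::real_vector \<times> real) set"
  assumes "convex K" "w extreme_point_of fst ` K"
  shows "K \<inter> {z. fst z = w} face_of K"
  unfolding face_of_def
proof (intro conjI ballI impI)
  have "convex {z::'a \<times> real. fst z = w}"
    unfolding convex_def by (auto simp flip: scaleR_add_left)
  then show "convex (K \<inter> {z. fst z = w})" using assms(1) by (rule convex_Int[rotated])
next
  fix a b x assume ab: "a \<in> K" "b \<in> K" "x \<in> K \<inter> {z. fst z = w}" "x \<in> open_segment a b"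
  obtain u where u: "0 < u" "u < 1" "x = (1 - u) *\<^sub>R a + u *\<^sub>R b"
    using ab(4) by (auto simp: in_segment)
  have eq: "w = (1 - u) *\<^sub>R fst a + u *\<^sub>R fst b" using ab(3) u(3) by simp
  have "fst a = w \<and> fst b = w"
  proof (cases "fst a = fst b")
    case True
    then show ?thesis using eq by (simp flip: scaleR_add_left)
  next
    case False
    then have "w \<in> open_segment (fst a) (fst b)" using eq u(1,2) by (auto simp: in_segment)
    then show ?thesis using assms(2) ab(1,2) unfolding extreme_point_of_def by blast
  qed
  then show "a \<in> K \<inter> {z. fst z = w}" "b \<in> K \<inter> {z. fst z = w}" using ab(1,2) by auto
qed auto

text \<open>The slice of the lifted polytope over a vertex w is a face, and its only extreme point
  is lift w.\<close>
lemma lifted_polytope_vertical_fiber: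
  fixes P :: "'a::euclidean_space set"
  assumes "convex P" "polytope P" and z: "z \<in> lifted_polytope P" and w: "w \<in> vertices P"
    and "fst z = w"
  shows "z = lift w"
proof -
  let ?Q = "lifted_polytope P"
  define Qw where "Qw = ?Q \<inter> {z. fst z = w}"
  have face: "Qw face_of ?Q" unfolding Qw_def
    using w fst_lifted_polytope[OF assms(1,2)]
    by (intro face_of_vertical_slice) (simp_all add: lifted_polytope_def vertices_def)
  then have "convex Qw" by (rule face_of_imp_convex)
  have "compact Qw" unfolding Qw_def lifted_polytope_def
    using finite_vertices[OF assms(2)]
    by (intro compact_Int_closed closed_Collect_eq continuous_intros polytope_imp_compact
        polytope_convex_hull finite_imageI)
  have "{x. x extreme_point_of Qw} \<subseteq> {lift w}"
  proof
    fix x assume "x \<in> {x. x extreme_point_of Qw}"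
    then have "x extreme_point_of ?Q" "x \<in> Qw" using extreme_point_of_face[OF face] by auto
    then have "x \<in> lift ` vertices P"
      unfolding lifted_polytope_def using extreme_point_of_convex_hull by blast
    then show "x \<in> {lift w}" using \<open>x \<in> Qw\<close> by (auto simp: Qw_def lift_def)
  qed
  then have "Qw \<subseteq> {lift w}"
    using Krein_Milman_Minkowski[OF \<open>compact Qw\<close> \<open>convex Qw\<close>] hull_mono[of _ "{lift w}" convex]
    by (metis convex_hull_singleton)
  moreover have "z \<in> Qw" using z \<open>fst z = w\<close> by (simp add: Qw_def)
  ultimately show ?thesis by blast
qed

lemma vertical_shelling_lifted_polytope:
  fixes P :: "'a::euclidean_space set"
  assumes "convex P" "polytope P" "aff_dim P = int DIM('a)" "generic_polytope P"
    and "\<sigma> \<in> {1, -1}"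
  shows "vertical_shelling (lifted_polytope P) (lift ` vertices P) \<sigma>"
proof
  show "finite (lift ` vertices P)" using finite_vertices[OF assms(2)] by simp
  show "lifted_polytope P = convex hull (lift ` vertices P)" by (simp add: lifted_polytope_def)
  show "interior (lifted_polytope P) \<noteq> {}"
    using assms(1-4) by (rule interior_lifted_polytope_nonempty)
  show "z = s" if "z \<in> lifted_polytope P" "s \<in> lift ` vertices P" "fst z = fst s" for z s
    using that lifted_polytope_vertical_fiber[OF assms(1,2) that(1)] by (auto simp: lift_def)
qed (fact assms(5))

theorem mainTheorem4:
  fixes P :: "'a::euclidean_space set"
  assumes "DIM('a) \<ge> 2"
    and "convex P" and "polytope P" and "aff_dim P = int DIM('a)"
    and "simplicial_polytope P"
    and "generic_polytope P"
  shows "(\<exists>S1 S2. S1 \<noteq> S2 \<and> delaunay_BM_ear P S1 \<and> delaunay_BM_ear P S2) \<and>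
         (\<exists>S1 S2. S1 \<noteq> S2 \<and> upper_delaunay_BM_ear P S1 \<and> upper_delaunay_BM_ear P S2)"
proof -
  let ?Q = "lifted_polytope P" and ?S = "lift ` vertices P"
  have lower: "vertical_shelling ?Q ?S 1" and upper: "vertical_shelling ?Q ?S (-1)"
    using vertical_shelling_lifted_polytope[OF assms(2-4,6)] by auto
  have "?S \<noteq> {}"
    using assms(4) convex_hull_vertices[OF assms(2,3)] by fastforce
  have "lower_facet ?Q = vertical_shelling.side_facet ?Q 1"
    by (rule ext) (simp add: lower_facet_def vertical_shelling.side_facet_def[OF lower])
  then obtain F1 F2 where "fst ` F1 \<noteq> fst ` F2"
    "BM_last ?Q (lower_facet ?Q) F1" "BM_last ?Q (lower_facet ?Q) F2"
    using vertical_shelling.two_BM_last_distinct_shadows[OF lower \<open>?S \<noteq> {}\<close>] by metis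
  moreover have "upper_facet ?Q = vertical_shelling.side_facet ?Q (-1)"
    by (rule ext) (simp add: upper_facet_def vertical_shelling.side_facet_def[OF upper])
  then obtain U1 U2 where "fst ` U1 \<noteq> fst ` U2"
    "BM_last ?Q (upper_facet ?Q) U1" "BM_last ?Q (upper_facet ?Q) U2"
    using vertical_shelling.two_BM_last_distinct_shadows[OF upper \<open>?S \<noteq> {}\<close>] by metis
  ultimately show ?thesis
    unfolding delaunay_BM_ear_def upper_delaunay_BM_ear_def by blast
qed

end
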